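(* Let $N\in\mathbb N$, $\alpha,\beta>-1$, $\mu\in(0,1)$, let $\{x_j,\omega_j\}_{j=0}^N$ be the JGL nodes and weights, and let $\hat Q_0^\mu,\dots,\hat Q_N^\mu\in\mathcal P_N$ be defined by $$ {}^R\hat D_-^\mu\hat Q_0^\mu(x_i)=0\ (1\le i\le N),\ \ \hat Q_0^\mu(-1)=1;\qquad {}^R\hat D_-^\mu\hat Q_j^\mu(x_i)=\delta_{ij}\ (1\le i\le N),\ \ \hat Q_j^\mu(-1)=0\ (1\le j\le N). $$ Then for $0\le j\le N$, $$ \hat Q_j^\mu(x)=\zeta_j\sum_{l=0}^N\frac{\Gamma(l-\mu+1)}{l!}\,\hat t_{lj}\,P_l(x),\qquad \hat t_{lj}=\sum_{n=l}^N{}^{(\alpha,\beta)}C^{(\mu,-\mu)}_{ln}\,t_{nj},\qquad t_{nj}=\frac{\omega_j}{\tilde\gamma_n^{(\alpha,\beta)}}P_n^{(\alpha,\beta)}(x_j), $$ where $\zeta_0=1/\Gamma(1-\mu)$ and $\zeta_j=1$ for $1\le j\le N$.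
   Context: For $\rho>0$, $(I_-^\rho u)(x)=\frac{1}{\Gamma(\rho)}\int_{-1}^x (x-y)^{\rho-1}u(y)\,dy$; for $\mu\in(0,1)$, ${}^R D_-^\mu u=\frac{d}{dx}(I_-^{1-\mu}u)$ and ${}^R\hat D_-^\mu u=(1+x)^\mu\,{}^R D_-^\mu u$ (a polynomial when $u$ is a polynomial). Jacobi polynomials are in Szegő's normalization: $P_n^{(\alpha,\beta)}(x)=\frac{\Gamma(n+\alpha+1)}{n!\Gamma(\alpha+1)}\,{}_2F_1\big(-n,n+\alpha+\beta+1;\alpha+1;\tfrac{1-x}{2}\big)$, $P_0^{(\alpha,\beta)}=1$, $P_n=P_n^{(0,0)}$. For $\alpha,\beta>-1$, $\gamma_n^{(\alpha,\beta)}=\frac{2^{\alpha+\beta+1}\Gamma(n+\alpha+1)\Gamma(n+\beta+1)}{(2n+\alpha+\beta+1)\,n!\,\Gamma(n+\alpha+\beta+1)}$; $\tilde\gamma_n^{(\alpha,\beta)}=\gamma_n^{(\alpha,\beta)}$ for $n\le N-1$ and $\tilde\gamma_N^{(\alpha,\beta)}=\big(2+\frac{\alpha+\beta+1}{N}\big)\gamma_N^{(\alpha,\beta)}$. Connection coefficients: for $\alpha,\beta,a,b>-1$, ${}^{(\alpha,\beta)}C^{(a,b)}_{ln}$ are the unique numbers with $P_n^{(\alpha,\beta)}=\sum_{l=0}^n {}^{(\alpha,\beta)}C^{(a,b)}_{ln}P_l^{(a,b)}$. JGL nodes $x_0<\dots<x_N$ are the zeros of $(1-x^2)\frac{d}{dx}P_N^{(\alpha,\beta)}$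 ($x_0=-1$, $x_N=1$) and the weights $\omega_j$ make $\int_{-1}^1\phi(1-x)^\alpha(1+x)^\beta dx=\sum_j\phi(x_j)\omega_j$ exact for $\phi\in\mathcal P_{2N-1}$. *)

theory Defs
  imports "HOL-Analysis.Analysis" "HOL-Computational_Algebra.Polynomial"
begin

definition rl_int :: "real \<Rightarrow> (real \<Rightarrow> real) \<Rightarrow> real \<Rightarrow> real" where
  "rl_int \<rho> u x = (1 / Gamma \<rho>) * integral {-1..x} (\<lambda>y. (x - y) powr (\<rho> - 1) * u y)"

definition rl_deriv :: "real \<Rightarrow> (real \<Rightarrow> real) \<Rightarrow> real \<Rightarrow> real" where
  "rl_deriv \<mu> u x = deriv (\<lambda>t. rl_int (1 - \<mu>) u t) x"

definition rl_hat_deriv :: "real \<Rightarrow> (real \<Rightarrow> real) \<Rightarrow> real \<Rightarrow> real" where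
  "rl_hat_deriv \<mu> u x = (1 + x) powr \<mu> * rl_deriv \<mu> u x"

(* Jacobi polynomial, Szego normalization, via the terminating 2F1 *)
definition jacobi_poly :: "real \<Rightarrow> real \<Rightarrow> nat \<Rightarrow> real poly" where
  "jacobi_poly a b n =
     smult (Gamma (real n + a + 1) / (fact n * Gamma (a + 1)))
       (\<Sum>k\<le>n. smult (pochhammer (- real n) k * pochhammer (real n + a + b + 1) k
                       / (pochhammer (a + 1) k * fact k))
                  ([:1/2, -1/2:] ^ k))"

(* gamma_n^{(a,b)}; for n = 0 the factor (2n+a+b+1) Gamma(n+a+b+1) is read as Gamma(a+b+2) *)
definition jacobi_gamma :: "real \<Rightarrow> real \<Rightarrow> nat \<Rightarrow> real" where
  "jacobi_gamma a b n =
     (if n = 0 then 2 powr (a + b + 1) * Gamma (a + 1) * Gamma (b + 1) / Gamma (a + b + 2)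
      else 2 powr (a + b + 1) * Gamma (real n + a + 1) * Gamma (real n + b + 1)
           / ((2 * real n + a + b + 1) * fact n * Gamma (real n + a + b + 1)))"

definition jacobi_gamma_tilde :: "real \<Rightarrow> real \<Rightarrow> nat \<Rightarrow> nat \<Rightarrow> real" where
  "jacobi_gamma_tilde a b N n =
     (if n = N then (2 + (a + b + 1) / real N) * jacobi_gamma a b N else jacobi_gamma a b n)"

definition conn_coeffs :: "real \<Rightarrow> real \<Rightarrow> real \<Rightarrow> real \<Rightarrow> nat \<Rightarrow> nat \<Rightarrow> real" where
  "conn_coeffs a b a' b' n =
     (THE c. (\<forall>l>n. c l = 0) \<and>
             jacobi_poly a b n = (\<Sum>l\<le>n. smult (c l) (jacobi_poly a' b' l)))"

definition conn_coeff :: "real \<Rightarrow> real \<Rightarrow> real \<Rightarrow> real \<Rightarrow> nat \<Rightarrow> nat \<Rightarrow> real" where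
  "conn_coeff a b a' b' l n = conn_coeffs a b a' b' n l"

end

theory Submission
  imports Defs
begin

(*
  On polynomials the modified Riemann--Liouville derivative acts diagonally on the powers of 1 + x,
  mapping (1 + x)^k to k! / Gamma(k + 1 - mu) (1 + x)^k.  Hence it is injective on P_N, and a
  polynomial of degree at most N is determined by its value at -1 = x_0 (where the derivative is the
  value divided by Gamma(1 - mu)) together with the values of its derivative at x_1, ..., x_N.

  Against the weight (1 - x)^mu (1 + x)^(-mu), the derivative of p has the same moments with respect to
  the powers (1 - x)^j as p has against the Legendre weight, up to explicit factors.  So the derivative of
  the Legendre polynomial P_l is orthogonal to all lower degrees and equals
  l! / Gamma(l + 1 - mu) P_l^(mu,-mu).

  On the other hand the Lagrange basis polynomial at x_j is sum_n t_nj P_n^(alpha,beta): the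
  Gauss--Lobatto rule is exact up to degree 2N - 1, so it reproduces the Jacobi orthogonality
  discretely, with the last norm gamma_N replaced by tilde-gamma_N (computed by adding to P_N^2 a
  multiple of x^(N-1) (1 - x^2) P_N' that vanishes at the nodes and cancels the leading term).
  Rewriting P_n^(alpha,beta) through the connection coefficients in the basis P_l^(mu,-mu) and pulling
  each P_l^(mu,-mu) back to a Legendre polynomial gives a polynomial whose derivative interpolates
  delta_ij at the nodes; uniqueness identifies it with Q_j.
*)

lemma Gamma_plus1_pos: "(z::real) > 0 \<Longrightarrow> Gamma (z + 1) = z * Gamma z"
  by (rule Gamma_plus1) (auto elim!: nonpos_Ints_cases)

lemma pochhammer_Gamma_pos: "(z::real) > 0 \<Longrightarrow> pochhammer z k = Gamma (z + real k) / Gamma z"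
  by (rule pochhammer_Gamma) (auto elim!: nonpos_Ints_cases)

lemma smult_sum_right: "smult c (\<Sum>i\<in>A. f i) = (\<Sum>i\<in>A. smult c (f i))"
  by (induction A rule: infinite_finite_induct) (simp_all add: smult_add_right)

lemma coeff_mult_top:
  fixes p q :: "'a::idom poly"
  assumes "degree p \<le> m" "degree q \<le> n"
  shows "coeff (p * q) (m + n) = coeff p m * coeff q n"
proof (cases "degree p = m \<and> degree q = n")
  case True
  then show ?thesis
    using coeff_mult_degree_sum[of p q] by simp
next
  case False
  then have "coeff p m = 0 \<or> coeff q n = 0"
    using assms by (auto intro: coeff_eq_0)
  moreover have "coeff (p * q) (m + n) = 0 \<or> p * q = 0"
    using False assms degree_mult_eq[of p q]
    by (cases "p = 0 \<or> q = 0") (auto intro!: coeff_eq_0)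
  ultimately show ?thesis
    by auto
qed

lemma degree_le_if_coeff_Suc_eq_0:
  fixes p :: "'a::zero poly"
  assumes "degree p \<le> Suc m" "coeff p (Suc m) = 0"
  shows "degree p \<le> m"
proof (rule ccontr)
  assume "\<not> degree p \<le> m"
  with assms(1) have "degree p = Suc m" by simp
  with assms(2) have "p = 0" by (metis leading_coeff_0_iff)
  with \<open>degree p = Suc m\<close> show False by simp
qed

lemma sum_atMost_atLeastAtMost_swap:
  fixes f :: "nat \<Rightarrow> nat \<Rightarrow> 'a::comm_monoid_add"
  shows "(\<Sum>l\<le>N. \<Sum>n=l..N. f l n) = (\<Sum>n\<le>N. \<Sum>l\<le>n. f l n)"
proof -
  have "(\<Sum>l\<le>N. \<Sum>n\<in>{n. n \<in> {..N} \<and> l \<le> n}. f l n) = (\<Sum>n\<le>N. \<Sum>l\<in>{l. l \<in> {..N} \<and> l \<le> n}. f l n)"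
    by (rule sum.swap_restrict) simp_all
  moreover have "{n. n \<in> {..N} \<and> l \<le> n} = {l..N}" "n \<le> N \<Longrightarrow> {l. l \<in> {..N} \<and> l \<le> n} = {..n}" for l n
    by auto
  ultimately show ?thesis
    by simp
qed

lemma lagrange_basis_poly:
  fixes xs :: "nat \<Rightarrow> 'a::field"
  assumes inj: "inj_on xs {..N}" and j: "j \<le> N"
  obtains l where "degree l \<le> N" "\<And>i. i \<le> N \<Longrightarrow> poly l (xs i) = (if i = j then 1 else 0)"
proof
  let ?S = "{..N} - {j}"
  define l where "l = smult (1 / (\<Prod>k\<in>?S. xs j - xs k)) (\<Prod>k\<in>?S. [:- xs k, 1:])"
  have "(\<Prod>k\<in>?S. xs j - xs k) \<noteq> 0"
    using inj j by (auto simp: inj_on_def)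
  then show "poly l (xs i) = (if i = j then 1 else 0)" if "i \<le> N" for i
    using that by (auto simp: l_def poly_prod intro!: prod_zero)
  have "degree (\<Prod>k\<in>?S. [:- xs k, 1:]) \<le> card ?S"
    using degree_prod_sum_le[of ?S "\<lambda>k. [:- xs k, 1:]"] by simp
  then show "degree l \<le> N"
    using j by (auto simp: l_def intro: order.trans[OF degree_smult_le])
qed

lemma alternating_binomial_sum_Suc:
  fixes f :: "nat \<Rightarrow> real"
  shows "(\<Sum>k\<le>Suc n. (-1) ^ k * real (Suc n choose k) * f k)
       = (\<Sum>k\<le>n. (-1) ^ k * real (n choose k) * (f k - f (Suc k)))"
proof -
  have shift: "(\<Sum>k\<le>n. (-1) ^ k * real (n choose k) * f k)
      = f 0 - (\<Sum>k\<le>n. (-1) ^ k * real (n choose Suc k) * f (Suc k))"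
  proof -
    have "(\<Sum>k\<le>n. (-1) ^ k * real (n choose k) * f k) = (\<Sum>k\<le>Suc n. (-1) ^ k * real (n choose k) * f k)"
      by simp
    also have "\<dots> = f 0 + (\<Sum>k\<le>n. (-1) ^ Suc k * real (n choose Suc k) * f (Suc k))"
      by (subst sum.atMost_Suc_shift) simp
    finally show ?thesis
      by (simp add: sum_negf)
  qed
  have "(\<Sum>k\<le>Suc n. (-1) ^ k * real (Suc n choose k) * f k)
      = f 0 + (\<Sum>k\<le>n. (-1) ^ Suc k * real (Suc n choose Suc k) * f (Suc k))"
    by (subst sum.atMost_Suc_shift) simp
  also have "\<dots> = f 0 + (\<Sum>k\<le>n. - ((-1) ^ k * real (n choose Suc k) * f (Suc k))
                    - (-1) ^ k * real (n choose k) * f (Suc k))"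
    by (intro arg_cong2[where f = "(+)"] refl sum.cong) (simp_all add: algebra_simps)
  also have "\<dots> = f 0 - (\<Sum>k\<le>n. (-1) ^ k * real (n choose Suc k) * f (Suc k))
                    - (\<Sum>k\<le>n. (-1) ^ k * real (n choose k) * f (Suc k))"
    by (simp add: sum_subtractf sum_negf)
  also have "\<dots> = (\<Sum>k\<le>n. (-1) ^ k * real (n choose k) * f k)
                    - (\<Sum>k\<le>n. (-1) ^ k * real (n choose k) * f (Suc k))"
    unfolding shift ..
  also have "\<dots> = (\<Sum>k\<le>n. (-1) ^ k * real (n choose k) * (f k - f (Suc k)))"
    by (simp add: algebra_simps sum_subtractf)
  finally show ?thesis .
qed

lemma alternating_binomial_sum_pochhammer:
  "r < n \<Longrightarrow> (\<Sum>k\<le>n. (-1) ^ k * real (n choose k) * pochhammer (d + real k) r) = 0"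
proof (induction n arbitrary: d r)
  case 0
  then show ?case by simp
next
  case (Suc n)
  show ?case
  proof (cases r)
    case 0
    then show ?thesis
      using alternating_binomial_sum_Suc[of n "\<lambda>k. pochhammer (d + real k) r"] by simp
  next
    case (Suc r')
    have "pochhammer (d + real k) r - pochhammer (d + real (Suc k)) r
        = - (real r' + 1) * pochhammer ((d + 1) + real k) r'" for k
      unfolding Suc pochhammer_rec[of "d + real k"] pochhammer_rec'[of "d + real (Suc k)"]
      by (simp add: algebra_simps)
    then have "(\<Sum>k\<le>Suc n. (-1) ^ k * real (Suc n choose k) * pochhammer (d + real k) r)
        = - (real r' + 1) * (\<Sum>k\<le>n. (-1) ^ k * real (n choose k) * pochhammer ((d + 1) + real k) r')"
      unfolding alternating_binomial_sum_Suc by (simp add: sum_distrib_left mult_ac)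
    then show ?thesis
      using Suc.IH[of r' "d + 1"] Suc.prems Suc by simp
  qed
qed

lemma alternating_binomial_sum_reciprocal:
  "c > 0 \<Longrightarrow> (\<Sum>k\<le>n. (-1) ^ k * real (n choose k) / (c + real k)) = fact n / pochhammer c (Suc n)"
proof (induction n arbitrary: c)
  case 0
  then show ?case by simp
next
  case (Suc n)
  have "(\<Sum>k\<le>Suc n. (-1) ^ k * real (Suc n choose k) / (c + real k))
      = (\<Sum>k\<le>n. (-1) ^ k * real (n choose k) / (c + real k))
        - (\<Sum>k\<le>n. (-1) ^ k * real (n choose k) / ((c + 1) + real k))"
    using alternating_binomial_sum_Suc[of n "\<lambda>k. 1 / (c + real k)"]
    by (simp add: algebra_simps sum_subtractf)
  also have "\<dots> = fact n / pochhammer c (Suc n) - fact n / pochhammer (c + 1) (Suc n)"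
    using Suc.IH[of c] Suc.IH[of "c + 1"] Suc.prems by simp
  also have "\<dots> = fact (Suc n) / pochhammer c (Suc (Suc n))"
  proof -
    define P where "P = pochhammer c (Suc n)"
    define d where "d = c + real (Suc n)"
    have pos: "P > 0" "d > 0"
      using Suc.prems by (simp_all add: P_def d_def pochhammer_pos)
    have step1: "pochhammer (c + 1) (Suc n) = P * d / c"
      using pochhammer_rec[of c "Suc n"] pochhammer_rec'[of c "Suc n"] Suc.prems
      by (simp add: P_def d_def eq_divide_eq algebra_simps)
    have step2: "pochhammer c (Suc (Suc n)) = d * P"
      by (simp add: P_def d_def pochhammer_rec')
    have fact_Suc: "fact (Suc n) = (d - c) * fact n"
      by (simp add: d_def algebra_simps)
    show ?thesis
      unfolding P_def[symmetric] step1 step2 fact_Suc using pos Suc.prems by (simp add: field_simps)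
  qed
  finally show ?case .
qed

lemma has_integral_Beta_interval:
  fixes T p q :: real
  assumes T: "T > -1" and p: "p > -1" and q: "q > -1"
  shows "((\<lambda>y. (T - y) powr p * (1 + y) powr q) has_integral
           (1 + T) powr (p + q + 1) * Beta (q + 1) (p + 1)) {-1..T}"
proof -
  define m where "m = 1 / (1 + T)"
  have m: "m > 0" using T by (simp add: m_def)
  have "((\<lambda>u. u powr q * (1 - u) powr p) has_integral Beta (q + 1) (p + 1)) (cbox 0 1)"
    using has_integral_Beta_real[of "q + 1" "p + 1"] p q by simp
  from has_integral_affinity'[OF this m, of m]
  have "((\<lambda>y. (m * y + m) powr q * (1 - (m * y + m)) powr p) has_integral
      inverse m * Beta (q + 1) (p + 1)) {- (inverse m * m)..inverse m * (1 - m)}"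
    by simp
  moreover have "inverse m = 1 + T" "inverse m * m = 1" "inverse m * (1 - m) = T"
    using T by (simp_all add: m_def field_simps)
  ultimately have "((\<lambda>y. (m * y + m) powr q * (1 - (m * y + m)) powr p) has_integral
      (1 + T) * Beta (q + 1) (p + 1)) {-1..T}"
    by simp
  then have "((\<lambda>y. (1 + T) powr (p + q) * ((m * y + m) powr q * (1 - (m * y + m)) powr p)) has_integral
      (1 + T) powr (p + q + 1) * Beta (q + 1) (p + 1)) {-1..T}"
    using T by (auto dest: has_integral_mult_right[of _ _ _ "(1 + T) powr (p + q)"]
                     simp: powr_add mult_ac)
  then show ?thesis
  proof (rule has_integral_spike_finite[OF finite.emptyI, rotated])
    fix y assume y: "y \<in> {-1..T} - {}"
    have "m * y + m = (1 + y) / (1 + T)" "1 - (m * y + m) = (T - y) / (1 + T)"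
      using T by (simp_all add: m_def field_simps)
    with y T show "(T - y) powr p * (1 + y) powr q
        = (1 + T) powr (p + q) * ((m * y + m) powr q * (1 - (m * y + m)) powr p)"
      by (simp add: powr_divide powr_add)
  qed
qed

section \<open>The modified Riemann--Liouville derivative on polynomials\<close>

definition shifted_coeff :: "real poly \<Rightarrow> nat \<Rightarrow> real" where
  "shifted_coeff p k = coeff (p \<circ>\<^sub>p [:-1, 1:]) k"

lemma shifted_coeff_eq_0: "degree p < k \<Longrightarrow> shifted_coeff p k = 0"
  by (simp add: shifted_coeff_def coeff_eq_0 degree_pcompose)

lemma poly_eq_sum_shifted_coeff:
  assumes "degree p \<le> n"
  shows "poly p y = (\<Sum>k\<le>n. shifted_coeff p k * (1 + y) ^ k)"
proof -
  have "poly p y = poly (p \<circ>\<^sub>p [:-1, 1:]) (1 + y)" by (simp add: poly_pcompose)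
  also have "\<dots> = (\<Sum>k\<le>degree p. shifted_coeff p k * (1 + y) ^ k)"
    unfolding poly_altdef by (simp add: shifted_coeff_def degree_pcompose)
  also have "\<dots> = (\<Sum>k\<le>n. shifted_coeff p k * (1 + y) ^ k)"
    by (rule sum.mono_neutral_left) (use assms in \<open>auto simp: shifted_coeff_eq_0\<close>)
  finally show ?thesis .
qed

lemma sum_shifted_coeff_eq:
  assumes "degree p \<le> n"
  shows "(\<Sum>k\<le>n. smult (shifted_coeff p k) ([:1, 1:] ^ k)) = p"
  by (rule poly_ext) (simp add: poly_eq_sum_shifted_coeff[OF assms] poly_sum poly_power add.commute)

lemma shifted_coeff_add: "shifted_coeff (p + q) k = shifted_coeff p k + shifted_coeff q k"
  by (simp add: shifted_coeff_def pcompose_add)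

lemma shifted_coeff_smult: "shifted_coeff (smult c p) k = c * shifted_coeff p k"
  by (simp add: shifted_coeff_def pcompose_smult)

lemma shifted_coeff_sum: "shifted_coeff (\<Sum>i\<in>A. f i) k = (\<Sum>i\<in>A. shifted_coeff (f i) k)"
  by (simp add: shifted_coeff_def pcompose_sum coeff_sum)

lemma shifted_coeff_linear_power: "shifted_coeff ([:1, 1:] ^ m) k = (if k = m then 1 else 0)"
proof -
  have "[:1, 1:] \<circ>\<^sub>p [:-1, 1:] = [:0, 1::real:]"
    by (simp add: pcompose_pCons)
  then have "[:1, 1:] ^ m \<circ>\<^sub>p [:-1, 1:] = [:0, 1::real:] ^ m"
    by (induction m) (simp_all only: power_Suc power_0 pcompose_mult pcompose_1)
  then show ?thesis by (simp add: shifted_coeff_def monom_altdef[of 1, simplified, symmetric])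
qed

lemma poly_eq_iff_shifted_coeff: "p = q \<longleftrightarrow> (\<forall>k. shifted_coeff p k = shifted_coeff q k)"
proof (intro iffI allI)
  assume same: "\<forall>k. shifted_coeff p k = shifted_coeff q k"
  let ?n = "max (degree p) (degree q)"
  have "p = (\<Sum>k\<le>?n. smult (shifted_coeff p k) ([:1, 1:] ^ k))"
    by (rule sum_shifted_coeff_eq[symmetric]) simp
  also have "\<dots> = (\<Sum>k\<le>?n. smult (shifted_coeff q k) ([:1, 1:] ^ k))"
    using same by simp
  also have "\<dots> = q"
    by (rule sum_shifted_coeff_eq) simp
  finally show "p = q" .
qed simp

lemma shifted_coeff_top:
  assumes "degree p \<le> n"
  shows "shifted_coeff p n = coeff p n"
proof -
  have "coeff p n = (\<Sum>k\<le>n. shifted_coeff p k * coeff ([:1, 1:] ^ k) n)"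
    by (subst sum_shifted_coeff_eq[OF assms, symmetric]) (simp add: coeff_sum)
  also have "\<dots> = shifted_coeff p n"
    by (subst sum.remove[of _ n])
       (auto intro!: sum.neutral coeff_eq_0 simp: degree_linear_power coeff_linear_power)
  finally show ?thesis by simp
qed

definition rl_hat_poly :: "real \<Rightarrow> real poly \<Rightarrow> real poly" where
  "rl_hat_poly \<mu> p =
     (\<Sum>k\<le>degree p. smult (shifted_coeff p k * fact k / Gamma (real k + 1 - \<mu>)) ([:1, 1:] ^ k))"

lemma shifted_coeff_rl_hat_poly:
  "shifted_coeff (rl_hat_poly \<mu> p) k = shifted_coeff p k * fact k / Gamma (real k + 1 - \<mu>)"
  by (cases "k \<le> degree p")
     (auto simp: rl_hat_poly_def shifted_coeff_sum shifted_coeff_smult shifted_coeff_linear_power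
                 shifted_coeff_eq_0 if_distrib cong: if_cong)

lemma degree_rl_hat_poly: "degree (rl_hat_poly \<mu> p) \<le> degree p"
  unfolding rl_hat_poly_def
  by (rule degree_sum_le) (auto intro!: order.trans[OF degree_smult_le] simp: degree_linear_power)

lemma poly_rl_hat_poly:
  assumes "degree p \<le> n"
  shows "poly (rl_hat_poly \<mu> p) x = (\<Sum>k\<le>n. shifted_coeff p k * fact k / Gamma (real k + 1 - \<mu>) * (1 + x) ^ k)"
  using poly_eq_sum_shifted_coeff[OF order.trans[OF degree_rl_hat_poly assms], where y = x]
  by (simp add: shifted_coeff_rl_hat_poly)

lemma rl_hat_poly_add: "rl_hat_poly \<mu> (p + q) = rl_hat_poly \<mu> p + rl_hat_poly \<mu> q"
  by (simp add: poly_eq_iff_shifted_coeff shifted_coeff_rl_hat_poly shifted_coeff_add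
                add_divide_distrib distrib_right)

lemma rl_hat_poly_0: "rl_hat_poly \<mu> 0 = 0"
  by (simp add: rl_hat_poly_def shifted_coeff_def)

lemma rl_hat_poly_smult: "rl_hat_poly \<mu> (smult c p) = smult c (rl_hat_poly \<mu> p)"
  by (simp add: poly_eq_iff_shifted_coeff shifted_coeff_rl_hat_poly shifted_coeff_smult)

lemma rl_hat_poly_sum: "rl_hat_poly \<mu> (\<Sum>i\<in>A. f i) = (\<Sum>i\<in>A. rl_hat_poly \<mu> (f i))"
  by (induction A rule: infinite_finite_induct) (simp_all add: rl_hat_poly_add rl_hat_poly_0)

lemma rl_hat_poly_inject:
  assumes "\<mu> < 1"
  shows "rl_hat_poly \<mu> p = rl_hat_poly \<mu> q \<longleftrightarrow> p = q"
proof -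
  have "fact k / Gamma (real k + 1 - \<mu>) \<noteq> (0::real)" for k
    using assms by (simp add: Gamma_real_pos[THEN less_imp_neq, symmetric])
  then show ?thesis
    by (auto simp: poly_eq_iff_shifted_coeff shifted_coeff_rl_hat_poly)
qed

lemma poly_rl_hat_poly_minus_one: "poly (rl_hat_poly \<mu> p) (-1) = poly p (-1) / Gamma (1 - \<mu>)"
  using poly_rl_hat_poly[of p "degree p" \<mu> "-1"] poly_eq_sum_shifted_coeff[of p "degree p" "-1"]
  by (simp add: zero_power if_distrib sum.delta cong: if_cong)

lemma has_integral_rl_kernel_power:
  assumes \<mu>: "\<mu> < 1" and t: "t > -1"
  shows "((\<lambda>y. (t - y) powr (- \<mu>) * (1 + y) ^ k) has_integral
           Gamma (1 - \<mu>) * (fact k / Gamma (real k + 2 - \<mu>)) * (1 + t) powr (real k + 1 - \<mu>)) {-1..t}"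
proof -
  have "Beta (real k + 1) (1 - \<mu>) = Gamma (1 - \<mu>) * (fact k / Gamma (real k + 2 - \<mu>))"
    using Gamma_fact[of k, where 'a = real] by (simp add: Beta_def add.commute add_diff_eq)
  moreover have "((\<lambda>y. (t - y) powr (- \<mu>) * (1 + y) powr real k) has_integral
      (1 + t) powr (real k + 1 - \<mu>) * Beta (real k + 1) (1 - \<mu>)) {-1..t}"
    using has_integral_Beta_interval[of t "- \<mu>" "real k"] \<mu> t by (simp add: algebra_simps)
  ultimately have "((\<lambda>y. (t - y) powr (- \<mu>) * (1 + y) powr real k) has_integral
      Gamma (1 - \<mu>) * (fact k / Gamma (real k + 2 - \<mu>)) * (1 + t) powr (real k + 1 - \<mu>)) {-1..t}"
    by (simp add: mult_ac)
  then show ?thesis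
    by (rule has_integral_spike_finite[OF finite.emptyI[THEN finite.insertI[of _ "-1"]], rotated])
       (auto simp: powr_realpow)
qed

lemma rl_int_poly:
  assumes \<mu>: "\<mu> < 1" and t: "t > -1"
  shows "rl_int (1 - \<mu>) (poly p) t =
     (\<Sum>k\<le>degree p. shifted_coeff p k * fact k / Gamma (real k + 2 - \<mu>) * (1 + t) powr (real k + 1 - \<mu>))"
proof -
  have integrand: "(t - y) powr ((1 - \<mu>) - 1) * poly p y
      = (\<Sum>k\<le>degree p. shifted_coeff p k * ((t - y) powr (- \<mu>) * (1 + y) ^ k))" for y
    by (simp add: poly_eq_sum_shifted_coeff[of p "degree p"] sum_distrib_left mult_ac)
  have "((\<lambda>y. (t - y) powr ((1 - \<mu>) - 1) * poly p y) has_integral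
      (\<Sum>k\<le>degree p. shifted_coeff p k *
         (Gamma (1 - \<mu>) * (fact k / Gamma (real k + 2 - \<mu>)) * (1 + t) powr (real k + 1 - \<mu>)))) {-1..t}"
    unfolding integrand
    by (intro has_integral_sum finite_atMost has_integral_mult_right has_integral_rl_kernel_power \<mu> t)
  moreover have "Gamma (1 - \<mu>) > 0" using \<mu> by simp
  ultimately show ?thesis
    unfolding rl_int_def by (simp add: integral_unique sum_distrib_left mult_ac)
qed

lemma rl_hat_deriv_poly:
  assumes \<mu>: "\<mu> < 1" and x: "x > -1"
  shows "rl_hat_deriv \<mu> (poly p) x = poly (rl_hat_poly \<mu> p) x"
proof -
  define c where "c k = shifted_coeff p k * fact k / Gamma (real k + 2 - \<mu>)" for k
  have exponent_pos: "real k + 1 - \<mu> > 0" for k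
    using \<mu> by simp
  have Gamma_step: "c k * (real k + 1 - \<mu>) = shifted_coeff p k * fact k / Gamma (real k + 1 - \<mu>)" for k
  proof -
    have "Gamma (real k + 2 - \<mu>) = Gamma ((real k + 1 - \<mu>) + 1)"
      by (simp add: algebra_simps)
    also have "\<dots> = (real k + 1 - \<mu>) * Gamma (real k + 1 - \<mu>)"
      by (rule Gamma_plus1_pos[OF exponent_pos])
    finally show ?thesis
      using exponent_pos[of k] by (simp add: c_def)
  qed
  have "((\<lambda>t. \<Sum>k\<le>degree p. c k * (1 + t) powr (real k + 1 - \<mu>)) has_real_derivative
      (\<Sum>k\<le>degree p. c k * ((real k + 1 - \<mu>) * (1 + x) powr (real k - \<mu>)))) (at x)"
    using x by (auto intro!: derivative_eq_intros sum.cong simp: mult_ac)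
  then have "((\<lambda>t. rl_int (1 - \<mu>) (poly p) t) has_real_derivative
      (\<Sum>k\<le>degree p. c k * ((real k + 1 - \<mu>) * (1 + x) powr (real k - \<mu>)))) (at x)"
    by (rule has_field_derivative_transform_within_open[of _ _ _ "{-1<..}"])
       (use x \<mu> in \<open>auto simp: c_def rl_int_poly\<close>)
  then have "rl_hat_deriv \<mu> (poly p) x
      = (\<Sum>k\<le>degree p. c k * (real k + 1 - \<mu>) * ((1 + x) powr \<mu> * (1 + x) powr (real k - \<mu>)))"
    unfolding rl_hat_deriv_def rl_deriv_def by (simp add: DERIV_imp_deriv sum_distrib_left mult_ac)
  also have "\<dots> = (\<Sum>k\<le>degree p. shifted_coeff p k * fact k / Gamma (real k + 1 - \<mu>) * (1 + x) ^ k)"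
    using x by (simp add: Gamma_step powr_add[symmetric] powr_realpow)
  also have "\<dots> = poly (rl_hat_poly \<mu> p) x"
    by (rule poly_rl_hat_poly[symmetric]) simp
  finally show ?thesis .
qed

lemma eq_if_rl_hat_deriv_eq_at_nodes:
  fixes p q :: "real poly"
  assumes \<mu>: "\<mu> < 1" and inj: "inj_on xs {..N}" and first: "xs 0 = -1"
    and inner: "\<And>i. 1 \<le> i \<Longrightarrow> i \<le> N \<Longrightarrow> xs i > -1"
    and deg: "degree p \<le> N" "degree q \<le> N"
    and at_first: "poly p (-1) = poly q (-1)"
    and at_inner: "\<forall>i\<in>{1..N}. rl_hat_deriv \<mu> (poly p) (xs i) = rl_hat_deriv \<mu> (poly q) (xs i)"
  shows "p = q"
proof -
  have "poly (rl_hat_poly \<mu> p) (xs i) = poly (rl_hat_poly \<mu> q) (xs i)" if "i \<le> N" for i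
  proof (cases "i = 0")
    case True
    then show ?thesis
      using at_first first by (simp add: poly_rl_hat_poly_minus_one)
  next
    case False
    then have "i \<in> {1..N}" and x: "xs i > -1"
      using that inner[of i] by auto
    then have "rl_hat_deriv \<mu> (poly p) (xs i) = rl_hat_deriv \<mu> (poly q) (xs i)"
      using at_inner by blast
    then show ?thesis
      by (simp add: rl_hat_deriv_poly[OF \<mu> x])
  qed
  moreover have "card (xs ` {..N}) = Suc N"
    using card_image[OF inj] by simp
  ultimately have "rl_hat_poly \<mu> p = rl_hat_poly \<mu> q"
    using deg degree_rl_hat_poly[of \<mu> p] degree_rl_hat_poly[of \<mu> q]
    by (intro poly_eqI_degree[of "xs ` {..N}"]) auto
  then show ?thesis
    by (simp add: rl_hat_poly_inject[OF \<mu>])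
qed

section \<open>Jacobi polynomials\<close>

definition jacobi_integral :: "real \<Rightarrow> real \<Rightarrow> real poly \<Rightarrow> real" where
  "jacobi_integral a b p = integral {-1..1} (\<lambda>t. poly p t * (1 - t) powr a * (1 + t) powr b)"

definition jacobi_moment :: "real \<Rightarrow> real \<Rightarrow> nat \<Rightarrow> nat \<Rightarrow> real" where
  "jacobi_moment a b j k = 2 powr (a + b + real j + real k + 1) * Beta (b + real k + 1) (a + real j + 1)"

lemma has_integral_jacobi_moment:
  assumes a: "a > -1" and b: "b > -1"
  shows "((\<lambda>t. poly ([:1, -1:] ^ j * [:1, 1:] ^ k) t * (1 - t) powr a * (1 + t) powr b)
            has_integral jacobi_moment a b j k) {-1..1}"
proof -
  have "((\<lambda>t. (1 - t) powr (a + real j) * (1 + t) powr (b + real k)) has_integral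
      jacobi_moment a b j k) {-1..1}"
    using has_integral_Beta_interval[of 1 "a + real j" "b + real k"] a b
    by (simp add: jacobi_moment_def add_ac)
  then show ?thesis
  proof (rule has_integral_spike_finite[OF finite.emptyI[THEN finite.insertI, THEN finite.insertI], rotated])
    fix t :: real assume "t \<in> {-1..1} - {-1, 1}"
    then show "poly ([:1, -1:] ^ j * [:1, 1:] ^ k) t * (1 - t) powr a * (1 + t) powr b
        = (1 - t) powr (a + real j) * (1 + t) powr (b + real k)"
      by (simp add: poly_power powr_realpow[symmetric] powr_add)
  qed
qed

lemma jacobi_integral_moment:
  "a > -1 \<Longrightarrow> b > -1 \<Longrightarrow> jacobi_integral a b ([:1, -1:] ^ j * [:1, 1:] ^ k) = jacobi_moment a b j k"
  unfolding jacobi_integral_def by (rule integral_unique[OF has_integral_jacobi_moment])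

lemma has_integral_jacobi_integral:
  assumes a: "a > -1" and b: "b > -1"
  shows "((\<lambda>t. poly p t * (1 - t) powr a * (1 + t) powr b) has_integral jacobi_integral a b p) {-1..1}"
proof -
  have integrand: "(\<Sum>k\<le>degree p. shifted_coeff p k *
          (poly ([:1, -1:] ^ 0 * [:1, 1:] ^ k) t * (1 - t) powr a * (1 + t) powr b))
      = poly p t * (1 - t) powr a * (1 + t) powr b" for t
  proof -
    have "poly p t = (\<Sum>k\<le>degree p. shifted_coeff p k * poly ([:1, -1:] ^ 0 * [:1, 1:] ^ k) t)"
      unfolding poly_eq_sum_shifted_coeff[OF order.refl, of p t] by (simp add: poly_power add.commute)
    then show ?thesis
      by (simp only: sum_distrib_right mult.assoc)
  qed
  have "((\<lambda>t. \<Sum>k\<le>degree p. shifted_coeff p k *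
              (poly ([:1, -1:] ^ 0 * [:1, 1:] ^ k) t * (1 - t) powr a * (1 + t) powr b))
      has_integral (\<Sum>k\<le>degree p. shifted_coeff p k * jacobi_moment a b 0 k)) {-1..1}"
    by (intro has_integral_sum finite_atMost has_integral_mult_right has_integral_jacobi_moment a b)
  then have "((\<lambda>t. poly p t * (1 - t) powr a * (1 + t) powr b)
      has_integral (\<Sum>k\<le>degree p. shifted_coeff p k * jacobi_moment a b 0 k)) {-1..1}"
    unfolding integrand .
  then show ?thesis
    unfolding jacobi_integral_def by (simp add: integral_unique)
qed

lemma jacobi_integral_add:
  assumes "a > -1" "b > -1"
  shows "jacobi_integral a b (p + q) = jacobi_integral a b p + jacobi_integral a b q"
proof -
  have "((\<lambda>t. poly (p + q) t * (1 - t) powr a * (1 + t) powr b) has_integral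
      jacobi_integral a b p + jacobi_integral a b q) {-1..1}"
    using has_integral_add[OF has_integral_jacobi_integral[OF assms, of p]
                              has_integral_jacobi_integral[OF assms, of q]]
    by (simp add: algebra_simps)
  then show ?thesis
    unfolding jacobi_integral_def[of a b "p + q"] by (rule integral_unique)
qed

lemma jacobi_integral_smult:
  assumes "a > -1" "b > -1"
  shows "jacobi_integral a b (smult c p) = c * jacobi_integral a b p"
proof -
  have "((\<lambda>t. poly (smult c p) t * (1 - t) powr a * (1 + t) powr b) has_integral
      c * jacobi_integral a b p) {-1..1}"
    using has_integral_mult_right[OF has_integral_jacobi_integral[OF assms, of p], where c = c]
    by (simp add: mult_ac)
  then show ?thesis
    unfolding jacobi_integral_def[of a b "smult c p"] by (rule integral_unique)
qed

lemma jacobi_integral_0: "jacobi_integral a b 0 = 0"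
  by (simp add: jacobi_integral_def)

lemma jacobi_integral_sum:
  "a > -1 \<Longrightarrow> b > -1 \<Longrightarrow> jacobi_integral a b (\<Sum>i\<in>A. f i) = (\<Sum>i\<in>A. jacobi_integral a b (f i))"
  by (induction A rule: infinite_finite_induct) (simp_all add: jacobi_integral_0 jacobi_integral_add)

lemma jacobi_integral_diff:
  "a > -1 \<Longrightarrow> b > -1 \<Longrightarrow> jacobi_integral a b (p - q) = jacobi_integral a b p - jacobi_integral a b q"
  using jacobi_integral_add[of a b "p - q" q] by simp

definition jacobi_coeff :: "real \<Rightarrow> real \<Rightarrow> nat \<Rightarrow> nat \<Rightarrow> real" where
  "jacobi_coeff a b n k = Gamma (real n + a + 1) / (fact n * Gamma (a + 1)) *
      (pochhammer (- real n) k * pochhammer (real n + a + b + 1) k / (pochhammer (a + 1) k * fact k)) / 2 ^ k"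

lemma jacobi_poly_altdef: "jacobi_poly a b n = (\<Sum>k\<le>n. smult (jacobi_coeff a b n k) ([:1, -1:] ^ k))"
proof -
  have half: "[:1/2, -1/2:] = smult (1/2) [:1, -1::real:]" by simp
  show ?thesis
    unfolding jacobi_poly_def half smult_power smult_sum_right smult_smult
    by (intro sum.cong refl) (simp add: jacobi_coeff_def power_one_over mult_ac)
qed

definition jacobi_lead :: "real \<Rightarrow> real \<Rightarrow> nat \<Rightarrow> real" where
  "jacobi_lead a b n = pochhammer (real n + a + b + 1) n / (2 ^ n * fact n)"

lemma jacobi_lead_pos: "a > -1 \<Longrightarrow> b > -1 \<Longrightarrow> jacobi_lead a b n > 0"
  by (cases n) (simp_all add: jacobi_lead_def pochhammer_pos)

lemma degree_jacobi_poly_le: "degree (jacobi_poly a b n) \<le> n"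
  unfolding jacobi_poly_altdef
  by (rule degree_sum_le) (auto intro!: order.trans[OF degree_smult_le] order.trans[OF degree_power_le])

lemma coeff_jacobi_poly_top:
  assumes a: "a > -1"
  shows "coeff (jacobi_poly a b n) n = jacobi_lead a b n"
proof -
  have "coeff (jacobi_poly a b n) n = (\<Sum>k\<le>n. jacobi_coeff a b n k * coeff ([:1, -1:] ^ k) n)"
    by (simp add: jacobi_poly_altdef coeff_sum)
  also have "\<dots> = jacobi_coeff a b n n * (-1) ^ n"
    by (subst sum.remove[of _ n])
       (auto simp: coeff_linear_power_neg intro!: sum.neutral coeff_eq_0 le_less_trans[OF degree_power_le])
  also have "\<dots> = jacobi_lead a b n"
  proof -
    have "pochhammer (a + 1) n = Gamma (real n + a + 1) / Gamma (a + 1)"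
      using pochhammer_Gamma_pos[of "a + 1" n] a by (simp add: add_ac)
    moreover have "Gamma (a + 1) > 0" "Gamma (real n + a + 1) > 0"
      using a by simp_all
    ultimately show ?thesis
      by (simp add: jacobi_coeff_def jacobi_lead_def pochhammer_same field_simps
                    power_mult_distrib[symmetric])
  qed
  finally show ?thesis .
qed

lemma degree_jacobi_poly:
  assumes "a > -1" "b > -1"
  shows "degree (jacobi_poly a b n) = n"
  using degree_jacobi_poly_le[of a b n] coeff_jacobi_poly_top[of a b n] jacobi_lead_pos[of a b n] assms
        le_degree[of "jacobi_poly a b n" n]
  by simp

lemma jacobi_poly_0:
  assumes "a > -1"
  shows "jacobi_poly a b 0 = 1"
proof -
  have "Gamma (a + 1) > 0" using assms by simp
  then show ?thesis by (simp add: jacobi_poly_def)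
qed

lemma pochhammer_minus_div_fact: "pochhammer (- real n) k / fact k = (-1) ^ k * real (n choose k)"
proof -
  have "real (n choose k) = (-1) ^ k * pochhammer (- real n) k / fact k"
    by (simp add: binomial_gbinomial gbinomial_pochhammer)
  then show ?thesis
    by (simp add: power_mult_distrib[symmetric])
qed

definition jacobi_power_scale :: "real \<Rightarrow> real \<Rightarrow> nat \<Rightarrow> nat \<Rightarrow> real" where
  "jacobi_power_scale a b n m = Gamma (real n + a + 1) / fact n * 2 powr (a + b + real m + 1)
      * Gamma (b + real m + 1) / Gamma (real n + a + b + 1)"

lemma jacobi_coeff_moment:
  assumes a: "a > -1" and b: "b > -1" and n: "n \<ge> 1"
  shows "jacobi_coeff a b n k * jacobi_moment a b k m = jacobi_power_scale a b n m *
           ((-1) ^ k * real (n choose k) *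
            (Gamma (real n + a + b + 1 + real k) / Gamma (a + b + real m + 2 + real k)))"
proof -
  define c where "c = real n + a + b + 1"
  have c: "c > 0" using a b n by (simp add: c_def)
  have Gammas_pos: "Gamma (a + 1) > 0" "Gamma (a + 1 + real k) > 0" "Gamma c > 0"
    "Gamma (c + real k) > 0" "Gamma (a + b + real m + 2 + real k) > 0"
    using a b c by (auto intro!: Gamma_real_pos)
  have M: "jacobi_moment a b k m = 2 powr (a + b + real m + 1) * 2 ^ k *
      (Gamma (b + real m + 1) * Gamma (a + 1 + real k) / Gamma (a + b + real m + 2 + real k))"
    by (simp add: jacobi_moment_def Beta_def powr_add powr_realpow add_ac)
  have J: "jacobi_coeff a b n k = Gamma (real n + a + 1) / (fact n * Gamma (a + 1)) *
      ((-1) ^ k * real (n choose k)) * (Gamma (c + real k) / Gamma c)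
      / (Gamma (a + 1 + real k) / Gamma (a + 1)) / 2 ^ k"
  proof -
    have "Gamma (a + 1 + real k) / Gamma (a + 1) = pochhammer (a + 1) k"
      using pochhammer_Gamma_pos[of "a + 1" k] a by simp
    then show ?thesis
      unfolding jacobi_coeff_def c_def[symmetric] pochhammer_minus_div_fact[symmetric]
        pochhammer_Gamma_pos[OF c, symmetric]
      by (simp add: mult_ac)
  qed
  show ?thesis
    unfolding M J using Gammas_pos by (simp add: jacobi_power_scale_def c_def field_simps)
qed

lemma jacobi_integral_jacobi_mult_power:
  assumes a: "a > -1" and b: "b > -1" and n: "n \<ge> 1"
  shows "jacobi_integral a b (jacobi_poly a b n * [:1, 1:] ^ m) = jacobi_power_scale a b n m *
           (\<Sum>k\<le>n. (-1) ^ k * real (n choose k) *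
              (Gamma (real n + a + b + 1 + real k) / Gamma (a + b + real m + 2 + real k)))"
  unfolding jacobi_poly_altdef sum_distrib_right using a b n
  by (simp add: jacobi_integral_sum jacobi_integral_smult jacobi_integral_moment jacobi_coeff_moment
                sum_distrib_left)

lemma jacobi_integral_jacobi_mult_power_less:
  assumes a: "a > -1" and b: "b > -1" and "m < n"
  shows "jacobi_integral a b (jacobi_poly a b n * [:1, 1:] ^ m) = 0"
proof -
  define d where "d = a + b + real m + 2"
  have "Gamma (real n + a + b + 1 + real k) / Gamma (a + b + real m + 2 + real k)
      = pochhammer (d + real k) (n - m - 1)" for k
    using pochhammer_Gamma_pos[of "d + real k" "n - m - 1"] a b \<open>m < n\<close>
    by (simp add: d_def of_nat_diff algebra_simps)
  then show ?thesis
    using alternating_binomial_sum_pochhammer[of "n - m - 1" n d] \<open>m < n\<close> a b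
    by (simp add: jacobi_integral_jacobi_mult_power)
qed

lemma jacobi_integral_jacobi_mult_power_self:
  assumes a: "a > -1" and b: "b > -1" and n: "n \<ge> 1"
  shows "jacobi_integral a b (jacobi_poly a b n * [:1, 1:] ^ n)
           = jacobi_power_scale a b n n * (fact n / pochhammer (real n + a + b + 1) (Suc n))"
proof -
  define c where "c = real n + a + b + 1"
  have c: "c > 0" using a b n by (simp add: c_def)
  have "Gamma (real n + a + b + 1 + real k) / Gamma (a + b + real n + 2 + real k) = 1 / (c + real k)" for k
  proof -
    have "Gamma (a + b + real n + 2 + real k) = Gamma ((c + real k) + 1)"
      by (simp add: c_def add_ac)
    also have "\<dots> = (c + real k) * Gamma (c + real k)"
      using c by (intro Gamma_plus1_pos) simp
    moreover have "Gamma (c + real k) > 0"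
      using c by simp
    ultimately show ?thesis
      by (simp add: c_def)
  qed
  then show ?thesis
    using alternating_binomial_sum_reciprocal[OF c, of n]
    by (simp add: jacobi_integral_jacobi_mult_power[OF a b n] c_def)
qed

lemma jacobi_integral_jacobi_mult_low:
  assumes a: "a > -1" and b: "b > -1" and q: "degree q < n"
  shows "jacobi_integral a b (jacobi_poly a b n * q) = 0"
proof -
  have "jacobi_poly a b n * q = (\<Sum>k\<le>n - 1. smult (shifted_coeff q k) (jacobi_poly a b n * [:1, 1:] ^ k))"
  proof -
    have "q = (\<Sum>k\<le>n - 1. smult (shifted_coeff q k) ([:1, 1:] ^ k))"
      using sum_shifted_coeff_eq[of q "n - 1"] q by simp
    then show ?thesis
      by (metis (no_types, lifting) mult_smult_right sum.cong sum_distrib_left)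
  qed
  moreover have "jacobi_integral a b (jacobi_poly a b n * [:1, 1:] ^ k) = 0" if "k \<le> n - 1" for k
    using that q by (intro jacobi_integral_jacobi_mult_power_less a b) simp
  ultimately show ?thesis
    by (simp add: jacobi_integral_sum[OF a b] jacobi_integral_smult[OF a b])
qed

lemma jacobi_integral_jacobi_mult_top:
  assumes a: "a > -1" and b: "b > -1" and q: "degree q \<le> n"
  shows "jacobi_integral a b (jacobi_poly a b n * q)
           = coeff q n * jacobi_integral a b (jacobi_poly a b n * [:1, 1:] ^ n)"
proof -
  define r where "r = q - smult (coeff q n) ([:1, 1:] ^ n)"
  have "degree r \<le> n"
    unfolding r_def using q
    by (intro degree_diff_le order.trans[OF degree_smult_le]) (simp_all add: degree_linear_power)
  moreover have "coeff r n = 0"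
    by (simp add: r_def coeff_linear_power)
  ultimately have "r = 0 \<or> degree r < n"
    using le_neq_implies_less leading_coeff_0_iff by blast
  then have "jacobi_integral a b (jacobi_poly a b n * r) = 0"
    using jacobi_integral_jacobi_mult_low[OF a b] by (auto simp: jacobi_integral_0)
  moreover have "jacobi_poly a b n * q
      = smult (coeff q n) (jacobi_poly a b n * [:1, 1:] ^ n) + jacobi_poly a b n * r"
    by (simp add: r_def algebra_simps)
  ultimately show ?thesis
    by (simp add: jacobi_integral_add[OF a b] jacobi_integral_smult[OF a b])
qed

lemma jacobi_integral_jacobi_sq:
  assumes a: "a > -1" and b: "b > -1"
  shows "jacobi_integral a b (jacobi_poly a b n * jacobi_poly a b n) = jacobi_gamma a b n"
proof (cases "n = 0")
  case True
  have "jacobi_integral a b ([:1, -1:] ^ 0 * [:1, 1:] ^ 0) = jacobi_moment a b 0 0"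
    by (rule jacobi_integral_moment[OF a b])
  moreover have "b + 1 + (a + 1) = a + b + 2" by simp
  ultimately show ?thesis
    using True a by (simp add: jacobi_poly_0 jacobi_gamma_def jacobi_moment_def Beta_def mult_ac add_ac)
next
  case False
  then have n: "n \<ge> 1" by simp
  define c where "c = real n + a + b + 1"
  define X where "X = c + real n"
  have pos: "X > 0" "pochhammer c n > 0" "Gamma c > 0"
    using a b n by (simp_all add: X_def c_def pochhammer_pos)
  have X: "2 * real n + a + b + 1 = X" "pochhammer c (Suc n) = X * pochhammer c n"
    by (simp_all add: X_def c_def pochhammer_rec')
  have "jacobi_integral a b (jacobi_poly a b n * jacobi_poly a b n)
      = jacobi_lead a b n * jacobi_integral a b (jacobi_poly a b n * [:1, 1:] ^ n)"
    using jacobi_integral_jacobi_mult_top[OF a b degree_jacobi_poly_le] coeff_jacobi_poly_top[OF a]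
    by simp
  also have "\<dots> = jacobi_gamma a b n"
    unfolding jacobi_integral_jacobi_mult_power_self[OF a b n] jacobi_lead_def jacobi_power_scale_def
      jacobi_gamma_def c_def[symmetric] X
    using False pos
    by (simp add: powr_add powr_realpow field_simps)
  finally show ?thesis .
qed

lemma jacobi_orthogonal:
  assumes a: "a > -1" and b: "b > -1" and "n \<noteq> m"
  shows "jacobi_integral a b (jacobi_poly a b n * jacobi_poly a b m) = 0"
proof (cases "m < n")
  case True
  then show ?thesis
    using jacobi_integral_jacobi_mult_low[OF a b] degree_jacobi_poly[OF a b, of m] by simp
next
  case False
  then show ?thesis
    using jacobi_integral_jacobi_mult_low[OF a b, of "jacobi_poly a b n" m] degree_jacobi_poly[OF a b, of n]
          \<open>n \<noteq> m\<close>
    by (simp add: mult.commute)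
qed

lemma jacobi_gamma_pos: "a > -1 \<Longrightarrow> b > -1 \<Longrightarrow> jacobi_gamma a b n > 0"
  by (cases "n = 0") (simp_all add: jacobi_gamma_def add_pos_pos)

lemma jacobi_integral_jacobi_mult:
  assumes a: "a > -1" and b: "b > -1" and q: "degree q \<le> n"
  shows "jacobi_integral a b (jacobi_poly a b n * q) = coeff q n / jacobi_lead a b n * jacobi_gamma a b n"
proof -
  have "jacobi_lead a b n * jacobi_integral a b (jacobi_poly a b n * [:1, 1:] ^ n) = jacobi_gamma a b n"
    using jacobi_integral_jacobi_mult_top[OF a b degree_jacobi_poly_le[of a b n]]
          jacobi_integral_jacobi_sq[OF a b, of n] coeff_jacobi_poly_top[OF a, of b n]
    by simp
  then show ?thesis
    using jacobi_integral_jacobi_mult_top[OF a b q] jacobi_lead_pos[OF a b, of n]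
    by (simp add: field_simps)
qed

lemma jacobi_basis_exists:
  assumes a: "a > -1" and b: "b > -1"
  shows "degree p \<le> d \<Longrightarrow> \<exists>c. p = (\<Sum>n\<le>d. smult (c n) (jacobi_poly a b n))"
proof (induction d arbitrary: p)
  case 0
  then obtain c0 where "p = [:c0:]"
    by (metis degree0_coeffs le_zero_eq)
  then have "p = (\<Sum>n\<le>0. smult ((\<lambda>_. c0) n) (jacobi_poly a b n))"
    using jacobi_poly_0[OF a] by simp
  then show ?case by (intro exI[of _ "\<lambda>_. c0"])
next
  case (Suc d)
  define t where "t = coeff p (Suc d) / jacobi_lead a b (Suc d)"
  define p' where "p' = p - smult t (jacobi_poly a b (Suc d))"
  have "degree p' \<le> Suc d"
    unfolding p'_def by (intro degree_diff_le Suc.prems order.trans[OF degree_smult_le] degree_jacobi_poly_le)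
  moreover have "coeff p' (Suc d) = 0"
    using jacobi_lead_pos[OF a b, of "Suc d"] by (simp add: p'_def t_def coeff_jacobi_poly_top[OF a])
  ultimately have "degree p' \<le> d"
    by (rule degree_le_if_coeff_Suc_eq_0)
  then obtain c where c: "p' = (\<Sum>n\<le>d. smult (c n) (jacobi_poly a b n))"
    using Suc.IH by blast
  have "p = (\<Sum>n\<le>Suc d. smult ((c(Suc d := t)) n) (jacobi_poly a b n))"
    using c by (simp add: p'_def algebra_simps)
  then show ?case by blast
qed

lemma jacobi_basis_coeff:
  assumes a: "a > -1" and b: "b > -1"
    and p: "p = (\<Sum>n\<le>d. smult (c n) (jacobi_poly a b n))" and "m \<le> d"
  shows "c m = jacobi_integral a b (p * jacobi_poly a b m) / jacobi_gamma a b m"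
proof -
  have "jacobi_integral a b (p * jacobi_poly a b m)
      = (\<Sum>n\<le>d. c n * jacobi_integral a b (jacobi_poly a b n * jacobi_poly a b m))"
    unfolding p by (simp add: sum_distrib_right jacobi_integral_sum[OF a b] jacobi_integral_smult[OF a b])
  also have "\<dots> = (\<Sum>n\<le>d. if n = m then c m * jacobi_gamma a b m else 0)"
    by (intro sum.cong refl) (auto simp: jacobi_orthogonal[OF a b] jacobi_integral_jacobi_sq[OF a b])
  also have "\<dots> = c m * jacobi_gamma a b m"
    using \<open>m \<le> d\<close> by simp
  finally show ?thesis
    using jacobi_gamma_pos[OF a b, of m] by simp
qed

lemma conn_coeff_expansion:
  assumes a: "a > -1" and b: "b > -1" and a': "a' > -1" and b': "b' > -1"
  shows "jacobi_poly a b n = (\<Sum>l\<le>n. smult (conn_coeff a b a' b' l n) (jacobi_poly a' b' l))"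
proof -
  let ?P = "\<lambda>c. (\<forall>l>n. c l = 0) \<and> jacobi_poly a b n = (\<Sum>l\<le>n. smult (c l) (jacobi_poly a' b' l))"
  obtain c where c: "jacobi_poly a b n = (\<Sum>l\<le>n. smult (c l) (jacobi_poly a' b' l))"
    using jacobi_basis_exists[OF a' b' degree_jacobi_poly_le] by blast
  define c' where "c' l = (if l \<le> n then c l else 0)" for l
  have c': "?P c'"
    using c by (simp add: c'_def)
  moreover have "e = c'" if "?P e" for e
  proof
    fix l
    show "e l = c' l"
    proof (cases "l \<le> n")
      case True
      then show ?thesis
        using jacobi_basis_coeff[OF a' b' _ True, of _ e] jacobi_basis_coeff[OF a' b' _ True, of _ c']
              that c'
        by metis
    next
      case False
      then show ?thesis
        using that by (simp add: c'_def)
    qed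
  qed
  ultimately have "?P (THE c. ?P c)"
    by (rule theI)
  then show ?thesis
    unfolding conn_coeff_def conn_coeffs_def by simp
qed

lemma eq_smult_jacobi_poly_if_orthogonal:
  assumes a: "a > -1" and b: "b > -1" and r: "degree r \<le> l"
    and orth: "\<And>n. n < l \<Longrightarrow> jacobi_integral a b (r * jacobi_poly a b n) = 0"
  shows "r = smult (coeff r l / jacobi_lead a b l) (jacobi_poly a b l)"
proof -
  obtain c where c: "r = (\<Sum>n\<le>l. smult (c n) (jacobi_poly a b n))"
    using jacobi_basis_exists[OF a b r] by blast
  have "c n = 0" if "n < l" for n
    using jacobi_basis_coeff[OF a b c, of n] orth[OF that] that by simp
  then have r_eq: "r = smult (c l) (jacobi_poly a b l)"
    unfolding c by (subst sum.remove[of _ l]) (auto intro!: sum.neutral)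
  moreover have "coeff r l / jacobi_lead a b l = c l"
    using jacobi_lead_pos[OF a b, of l] by (simp add: r_eq coeff_jacobi_poly_top[OF a])
  ultimately show ?thesis
    by simp
qed

section \<open>Fractional derivatives of Legendre polynomials\<close>

lemma jacobi_moment_fractional:
  assumes "\<mu> < 1"
  shows "fact k / Gamma (real k + 1 - \<mu>) * jacobi_moment \<mu> (- \<mu>) j k
           = Gamma (\<mu> + real j + 1) / fact j * jacobi_moment 0 0 j k"
proof -
  have "Gamma (real k + 1 - \<mu>) > 0"
    using assms by simp
  moreover have "Gamma (real k + 1) = fact k" "Gamma (real j + 1) = fact j"
    using Gamma_fact[of k, where 'a = real] Gamma_fact[of j, where 'a = real] by (simp_all add: add.commute)
  ultimately show ?thesis
    by (simp add: jacobi_moment_def Beta_def algebra_simps)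
qed

lemma jacobi_integral_rl_hat_poly_mult:
  assumes \<mu>: "-1 < \<mu>" "\<mu> < 1"
  shows "jacobi_integral \<mu> (- \<mu>) (rl_hat_poly \<mu> p * [:1, -1:] ^ j)
           = Gamma (\<mu> + real j + 1) / fact j * jacobi_integral 0 0 (p * [:1, -1:] ^ j)"
proof -
  have w: "\<mu> > -1" "- \<mu> > -1" "(0::real) > -1"
    using \<mu> by auto
  have rl: "rl_hat_poly \<mu> p * [:1, -1:] ^ j = (\<Sum>k\<le>degree p.
      smult (shifted_coeff p k * fact k / Gamma (real k + 1 - \<mu>)) ([:1, -1:] ^ j * [:1, 1:] ^ k))"
    unfolding rl_hat_poly_def sum_distrib_right by (intro sum.cong refl) (simp add: mult.commute)
  have "p * [:1, -1:] ^ j = (\<Sum>k\<le>degree p. smult (shifted_coeff p k) ([:1, 1:] ^ k)) * [:1, -1:] ^ j"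
    by (simp add: sum_shifted_coeff_eq)
  also have "\<dots> = (\<Sum>k\<le>degree p. smult (shifted_coeff p k) ([:1, -1:] ^ j * [:1, 1:] ^ k))"
    unfolding sum_distrib_right by (intro sum.cong refl) (simp add: mult.commute)
  finally have p: "p * [:1, -1:] ^ j
      = (\<Sum>k\<le>degree p. smult (shifted_coeff p k) ([:1, -1:] ^ j * [:1, 1:] ^ k))" .
  have "jacobi_integral \<mu> (- \<mu>) (rl_hat_poly \<mu> p * [:1, -1:] ^ j)
      = (\<Sum>k\<le>degree p. shifted_coeff p k * (fact k / Gamma (real k + 1 - \<mu>) * jacobi_moment \<mu> (- \<mu>) j k))"
    unfolding rl
    by (simp only: jacobi_integral_sum[OF w(1,2)] jacobi_integral_smult[OF w(1,2)]
                   jacobi_integral_moment[OF w(1,2)]) (simp add: mult_ac)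
  also have "\<dots> = (\<Sum>k\<le>degree p. shifted_coeff p k * (Gamma (\<mu> + real j + 1) / fact j * jacobi_moment 0 0 j k))"
    by (simp only: jacobi_moment_fractional[OF \<mu>(2)])
  also have "\<dots> = Gamma (\<mu> + real j + 1) / fact j * jacobi_integral 0 0 (p * [:1, -1:] ^ j)"
    unfolding p
    by (simp only: jacobi_integral_sum[OF w(3,3)] jacobi_integral_smult[OF w(3,3)]
                   jacobi_integral_moment[OF w(3,3)]) (simp add: sum_distrib_left mult_ac)
  finally show ?thesis .
qed

lemma rl_hat_poly_legendre:
  assumes \<mu>: "-1 < \<mu>" "\<mu> < 1"
  shows "rl_hat_poly \<mu> (jacobi_poly 0 0 l) = smult (fact l / Gamma (real l + 1 - \<mu>)) (jacobi_poly \<mu> (- \<mu>) l)"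
proof -
  have w: "\<mu> > -1" "- \<mu> > -1" "(0::real) > -1"
    using \<mu> by auto
  define r where "r = rl_hat_poly \<mu> (jacobi_poly 0 0 l)"
  have r: "degree r \<le> l"
    unfolding r_def by (rule order.trans[OF degree_rl_hat_poly degree_jacobi_poly_le])
  have "jacobi_integral \<mu> (- \<mu>) (r * jacobi_poly \<mu> (- \<mu>) n) = 0" if "n < l" for n
  proof -
    have "jacobi_integral 0 0 (jacobi_poly 0 0 l * [:1, -1:] ^ k) = 0" if "k \<le> n" for k
      using \<open>n < l\<close> that
      by (intro jacobi_integral_jacobi_mult_low w) (simp add: degree_linear_power_neg le_less_trans)
    then have "jacobi_integral \<mu> (- \<mu>) (r * [:1, -1:] ^ k) = 0" if "k \<le> n" for k
      using that by (simp add: r_def jacobi_integral_rl_hat_poly_mult[OF \<mu>])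
    moreover have "r * jacobi_poly \<mu> (- \<mu>) n = (\<Sum>k\<le>n. smult (jacobi_coeff \<mu> (- \<mu>) n k) (r * [:1, -1:] ^ k))"
      unfolding jacobi_poly_altdef[of \<mu> "- \<mu>" n] by (simp add: sum_distrib_left)
    ultimately show ?thesis
      by (simp add: jacobi_integral_sum[OF w(1,2)] jacobi_integral_smult[OF w(1,2)])
  qed
  then have "r = smult (coeff r l / jacobi_lead \<mu> (- \<mu>) l) (jacobi_poly \<mu> (- \<mu>) l)"
    by (intro eq_smult_jacobi_poly_if_orthogonal w r)
  moreover have "coeff r l = jacobi_lead \<mu> (- \<mu>) l * (fact l / Gamma (real l + 1 - \<mu>))"
    using shifted_coeff_top[OF r] shifted_coeff_top[OF degree_jacobi_poly_le, of 0 0 l]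
          coeff_jacobi_poly_top[OF w(3), of 0 l]
    by (simp add: r_def shifted_coeff_rl_hat_poly jacobi_lead_def)
  ultimately show ?thesis
    using jacobi_lead_pos[OF w(1,2), of l] by (simp add: r_def)
qed

lemma rl_hat_poly_legendre_expansion:
  assumes \<alpha>: "\<alpha> > -1" and \<beta>: "\<beta> > -1" and \<mu>: "-1 < \<mu>" "\<mu> < 1"
  shows "rl_hat_poly \<mu> (\<Sum>l\<le>N. smult (Gamma (real l - \<mu> + 1) / fact l *
              (\<Sum>n=l..N. conn_coeff \<alpha> \<beta> \<mu> (- \<mu>) l n * t n)) (jacobi_poly 0 0 l))
           = (\<Sum>n\<le>N. smult (t n) (jacobi_poly \<alpha> \<beta> n))"
proof -
  have "Gamma (real l + 1 - \<mu>) > 0" for l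
    using \<mu> by simp
  then have "Gamma (real l + 1 - \<mu>) \<noteq> 0" for l
    by (metis less_irrefl)
  then have "rl_hat_poly \<mu> (\<Sum>l\<le>N. smult (Gamma (real l - \<mu> + 1) / fact l *
              (\<Sum>n=l..N. conn_coeff \<alpha> \<beta> \<mu> (- \<mu>) l n * t n)) (jacobi_poly 0 0 l))
      = (\<Sum>l\<le>N. \<Sum>n=l..N. smult (conn_coeff \<alpha> \<beta> \<mu> (- \<mu>) l n * t n) (jacobi_poly \<mu> (- \<mu>) l))"
    by (simp add: rl_hat_poly_sum rl_hat_poly_smult rl_hat_poly_legendre[OF \<mu>] smult_sum add.commute
                  add_diff_eq)
  also have "\<dots> = (\<Sum>n\<le>N. smult (t n) (\<Sum>l\<le>n. smult (conn_coeff \<alpha> \<beta> \<mu> (- \<mu>) l n) (jacobi_poly \<mu> (- \<mu>) l)))"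
    by (simp add: sum_atMost_atLeastAtMost_swap smult_sum_right mult.commute)
  also have "\<dots> = (\<Sum>n\<le>N. smult (t n) (jacobi_poly \<alpha> \<beta> n))"
    using \<mu> by (simp add: conn_coeff_expansion[OF \<alpha> \<beta>, symmetric])
  finally show ?thesis .
qed

section \<open>Jacobi--Gauss--Lobatto quadrature\<close>

lemma jacobi_moment_by_parts:
  assumes a: "a > -1" and b: "b > -1"
  shows "real i * jacobi_moment a b 1 i = (a + 1) * jacobi_moment a b 0 (Suc i) - (b + 1) * jacobi_moment a b 1 i"
proof -
  have pos: "a + 1 > 0" "b + real i + 1 > 0" "Gamma (a + b + real i + 3) > 0"
    using a b by auto
  have exponents: "a + real (1::nat) + 1 = a + 1 + 1" "b + real (Suc i) + 1 = b + real i + 1 + 1"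
    "b + real i + 1 + (a + 1 + 1) = a + b + real i + 3"
    "b + real i + 1 + 1 + (a + real (0::nat) + 1) = a + b + real i + 3"
    "a + b + real (1::nat) + real i + 1 = a + b + real i + 2"
    "a + b + real (0::nat) + real (Suc i) + 1 = a + b + real i + 2" "a + real (0::nat) + 1 = a + 1"
    by simp_all
  show ?thesis
    unfolding jacobi_moment_def Beta_def exponents Gamma_plus1_pos[OF pos(1)] Gamma_plus1_pos[OF pos(2)]
    using pos(3) by (simp add: field_simps)
qed

lemma pderiv_linear_power_mult:
  "pderiv ([:1, 1:] ^ i) * [:1, 0, -1:] = smult (real i) ([:1, -1:] ^ 1 * [:1, 1:] ^ i)"
proof (cases i)
  case (Suc j)
  have "[:1, 0, -1::real:] = [:1, -1:] * [:1, 1:]" "pderiv [:1, 1::real:] = 1"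
    by (simp_all add: pderiv_pCons)
  then show ?thesis
    unfolding Suc pderiv_power_Suc
    by (simp only: mult_1_right mult_1_left mult_smult_left mult_smult_right power_Suc power_one_right ac_simps)
qed simp

text \<open>
  Integration by parts: \<open>(1 - x\<^sup>2) w(x)\<close> vanishes at \<open>\<plusminus>1\<close> and its derivative is
  \<open>-(a - b + (a + b + 2) x) w(x)\<close> for the weight \<open>w(x) = (1 - x)\<^sup>a (1 + x)\<^sup>b\<close>; on the basis
  \<open>(1 + x)\<^sup>i\<close> this is an identity between Beta values.
\<close>
lemma jacobi_integral_by_parts:
  assumes a: "a > -1" and b: "b > -1"
  shows "jacobi_integral a b (pderiv f * [:1, 0, -1:]) = jacobi_integral a b (f * [:a - b, a + b + 2:])"
proof -
  have basis: "jacobi_integral a b (pderiv ([:1, 1:] ^ i) * [:1, 0, -1:])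
      = jacobi_integral a b ([:1, 1:] ^ i * [:a - b, a + b + 2:])" for i
  proof -
    have "[:1, 1:] ^ i * [:a - b, a + b + 2:] =
        smult (a + 1) ([:1, -1:] ^ 0 * [:1, 1:] ^ Suc i) - smult (b + 1) ([:1, -1:] ^ 1 * [:1, 1:] ^ i)"
      by (intro poly_ext) (simp add: poly_power algebra_simps)
    then show ?thesis
      unfolding pderiv_linear_power_mult using jacobi_moment_by_parts[OF a b, of i]
      by (simp only: jacobi_integral_diff[OF a b] jacobi_integral_smult[OF a b] jacobi_integral_moment[OF a b])
  qed
  have f: "f = (\<Sum>i\<le>degree f. smult (shifted_coeff f i) ([:1, 1:] ^ i))"
    by (rule sum_shifted_coeff_eq[symmetric]) simp
  have "jacobi_integral a b (pderiv f * [:1, 0, -1:])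
      = (\<Sum>i\<le>degree f. shifted_coeff f i * jacobi_integral a b (pderiv ([:1, 1:] ^ i) * [:1, 0, -1:]))"
    by (subst f) (simp add: higher_pderiv_sum[of 1, simplified] pderiv_smult sum_distrib_right
                            jacobi_integral_sum[OF a b] jacobi_integral_smult[OF a b]
                       del: mult_pCons_left mult_pCons_right)
  also have "\<dots> = jacobi_integral a b (f * [:a - b, a + b + 2:])"
    unfolding basis
    by (subst (2) f) (simp add: sum_distrib_right jacobi_integral_sum[OF a b] jacobi_integral_smult[OF a b]
                           del: mult_pCons_left mult_pCons_right)
  finally show ?thesis .
qed

lemma jacobi_integral_by_parts_mult:
  assumes a: "a > -1" and b: "b > -1"
  shows "jacobi_integral a b (f * ([:1, 0, -1:] * pderiv p))
           = jacobi_integral a b (p * (f * [:a - b, a + b + 2:] - pderiv f * [:1, 0, -1:]))"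
proof -
  have "pderiv (f * p) * [:1, 0, -1:] = f * ([:1, 0, -1:] * pderiv p) + p * (pderiv f * [:1, 0, -1:])"
    by (simp only: pderiv_mult algebra_simps)
  moreover have "p * (f * [:a - b, a + b + 2:] - pderiv f * [:1, 0, -1:])
      = f * p * [:a - b, a + b + 2:] - p * (pderiv f * [:1, 0, -1:])"
    by (simp only: algebra_simps)
  ultimately show ?thesis
    using jacobi_integral_by_parts[OF a b, of "f * p"]
    by (simp add: jacobi_integral_add[OF a b] jacobi_integral_diff[OF a b])
qed

lemma degree_coeff_by_parts_factor:
  fixes f :: "real poly"
  assumes "degree f \<le> m"
  shows "degree (f * [:a - b, a + b + 2:] - pderiv f * [:1, 0, -1:]) \<le> m + 1"
    and "coeff (f * [:a - b, a + b + 2:] - pderiv f * [:1, 0, -1:]) (m + 1) = (real m + a + b + 2) * coeff f m"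
proof -
  have "degree (pderiv f * [:1, 0, -1:]) \<le> m + 1"
  proof (cases "degree f = 0")
    case True
    then have "pderiv f = 0" by (simp add: pderiv_eq_0_iff)
    then show ?thesis by simp
  next
    case False
    then show ?thesis
      using assms degree_mult_le[of "pderiv f" "[:1, 0, -1:]"] by (simp add: degree_pderiv)
  qed
  moreover have "degree (f * [:a - b, a + b + 2:]) \<le> m + 1"
  proof -
    have "degree [:a - b, a + b + 2:] \<le> 1"
      using degree_pCons_le[of "a - b" "[:a + b + 2:]"] by simp
    then show ?thesis
      using assms degree_mult_le[of f "[:a - b, a + b + 2:]"] by linarith
  qed
  ultimately show "degree (f * [:a - b, a + b + 2:] - pderiv f * [:1, 0, -1:]) \<le> m + 1"
    by (rule degree_diff_le[rotated])
  show "coeff (f * [:a - b, a + b + 2:] - pderiv f * [:1, 0, -1:]) (m + 1) = (real m + a + b + 2) * coeff f m"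
    using assms by (cases m) (simp_all add: coeff_pderiv coeff_eq_0 algebra_simps)
qed

lemma jacobi_integral_lobatto_correction:
  assumes a: "a > -1" and b: "b > -1" and N: "N \<ge> 1"
  shows "jacobi_integral a b (monom 1 (N - 1) * ([:1, 0, -1:] * pderiv (jacobi_poly a b N)))
           = (real N + a + b + 1) / jacobi_lead a b N * jacobi_gamma a b N"
proof -
  define g where "g = monom 1 (N - 1) * [:a - b, a + b + 2:] - pderiv (monom 1 (N - 1)) * [:1, 0, -1:]"
  have top: "N - 1 + 1 = N"
    using N by simp
  have g: "degree g \<le> N" "coeff g N = real N + a + b + 1"
    using degree_coeff_by_parts_factor[of "monom (1::real) (N - 1)" "N - 1" a b] N
    unfolding top g_def[symmetric] by (simp_all add: degree_monom_le of_nat_diff)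
  have "jacobi_integral a b (monom 1 (N - 1) * ([:1, 0, -1:] * pderiv (jacobi_poly a b N)))
      = jacobi_integral a b (jacobi_poly a b N * g)"
    by (simp only: jacobi_integral_by_parts_mult[OF a b] g_def)
  also have "\<dots> = coeff g N / jacobi_lead a b N * jacobi_gamma a b N"
    by (rule jacobi_integral_jacobi_mult[OF a b g(1)])
  finally show ?thesis
    by (simp add: g(2))
qed

lemma degree_lobatto_square_le:
  fixes p :: "real poly"
  assumes N: "N \<ge> 1" and p: "degree p \<le> N"
  shows "degree (p * p + smult (coeff p N / real N) (monom 1 (N - 1) * ([:1, 0, -1:] * pderiv p)))
           \<le> 2 * N - 1"
proof (rule degree_le_if_coeff_Suc_eq_0)
  let ?r = "[:1, 0, -1:] * pderiv p"
  have p': "degree (pderiv p) \<le> N - 1"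
    using p by (simp add: degree_pderiv)
  have W: "degree [:1, 0, -1::real:] \<le> 2" "coeff [:1, 0, -1::real:] 2 = -1"
    by (simp_all add: numeral_2_eq_2)
  have r: "degree ?r \<le> 2 + (N - 1)" "coeff ?r (2 + (N - 1)) = - (real N * coeff p N)"
    using degree_mult_le[of "[:1, 0, -1:]" "pderiv p"] W p' coeff_mult_top[OF W(1) p'] N
    by (simp_all add: coeff_pderiv)
  have top: "Suc (2 * N - 1) = N + N" "Suc (2 * N - 1) = (N - 1) + (2 + (N - 1))"
    using N by simp_all
  have "degree (monom 1 (N - 1) * ?r) \<le> Suc (2 * N - 1)"
    unfolding top(2) using degree_mult_le[of "monom 1 (N - 1)" ?r] r(1) degree_monom_le[of "1::real" "N - 1"]
    by linarith
  moreover have "degree (p * p) \<le> Suc (2 * N - 1)"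
    unfolding top(1) using degree_mult_le[of p p] p by linarith
  ultimately show "degree (p * p + smult (coeff p N / real N) (monom 1 (N - 1) * ?r)) \<le> Suc (2 * N - 1)"
    by (intro degree_add_le order.trans[OF degree_smult_le])
  have "coeff (monom 1 (N - 1) * ?r) (Suc (2 * N - 1)) = - (real N * coeff p N)"
    unfolding top(2) using coeff_mult_top[OF degree_monom_le r(1)] r(2) by simp
  moreover have "coeff (p * p) (Suc (2 * N - 1)) = coeff p N * coeff p N"
    unfolding top(1) by (rule coeff_mult_top[OF p p])
  ultimately show "coeff (p * p + smult (coeff p N / real N) (monom 1 (N - 1) * ?r)) (Suc (2 * N - 1)) = 0"
    using N by simp
qed

lemma jacobi_gamma_tilde_pos:
  assumes N: "N \<ge> 1" and a: "a > -1" and b: "b > -1"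
  shows "jacobi_gamma_tilde a b N n > 0"
proof -
  have "2 + (a + b + 1) / real N > 0"
    using a b N by (simp add: field_simps)
  then show ?thesis
    using jacobi_gamma_pos[OF a b] by (simp add: jacobi_gamma_tilde_def)
qed

locale jacobi_gauss_lobatto =
  fixes N :: nat and a b :: real and xs \<omega> :: "nat \<Rightarrow> real"
  assumes N: "N \<ge> 1" and a: "a > -1" and b: "b > -1"
    and nodes_increasing: "\<And>i. i < N \<Longrightarrow> xs i < xs (Suc i)"
    and nodes_roots: "\<And>i. i \<le> N \<Longrightarrow> poly ([:1, 0, -1:] * pderiv (jacobi_poly a b N)) (xs i) = 0"
    and quadrature_exact:
      "\<And>p. degree p \<le> 2 * N - 1 \<Longrightarrow> (\<Sum>j\<le>N. poly p (xs j) * \<omega> j) = jacobi_integral a b p"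
begin

lemma nodes_less: "i < k \<Longrightarrow> k \<le> N \<Longrightarrow> xs i < xs k"
  by (rule lift_Suc_mono_less_ivl[where N = "{..<N}"]) (auto intro: nodes_increasing)

lemma inj_on_nodes: "inj_on xs {..N}"
  by (rule inj_onI) (metis atMost_iff nodes_less less_irrefl nat_neq_iff)

lemma discrete_norm_last:
  "(\<Sum>i\<le>N. poly (jacobi_poly a b N * jacobi_poly a b N) (xs i) * \<omega> i) = jacobi_gamma_tilde a b N N"
proof -
  define P where "P = jacobi_poly a b N"
  define r where "r = monom 1 (N - 1) * ([:1, 0, -1:] * pderiv P)"
  define e where "e = P * P + smult (jacobi_lead a b N / real N) r"
  have "degree e \<le> 2 * N - 1"
    using degree_lobatto_square_le[OF N degree_jacobi_poly_le[of a b N]]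
    by (simp add: e_def r_def P_def coeff_jacobi_poly_top[OF a])
  then have "(\<Sum>i\<le>N. poly e (xs i) * \<omega> i) = jacobi_integral a b e"
    by (rule quadrature_exact)
  moreover have "poly e (xs i) = poly (P * P) (xs i)" if "i \<le> N" for i
    using nodes_roots[OF that] by (simp add: e_def r_def P_def)
  moreover have "jacobi_integral a b e = (2 + (a + b + 1) / real N) * jacobi_gamma a b N"
    using jacobi_integral_lobatto_correction[OF a b N] jacobi_integral_jacobi_sq[OF a b, of N]
          jacobi_lead_pos[OF a b, of N] N
    by (simp add: e_def r_def P_def jacobi_integral_add[OF a b] jacobi_integral_smult[OF a b] field_simps)
  ultimately show ?thesis
    by (simp add: P_def jacobi_gamma_tilde_def)
qed

lemma discrete_orthogonality:
  assumes m: "m \<le> N" and n: "n \<le> N"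
  shows "(\<Sum>i\<le>N. poly (jacobi_poly a b m * jacobi_poly a b n) (xs i) * \<omega> i)
           = (if m = n then jacobi_gamma_tilde a b N n else 0)"
proof (cases "m = N \<and> n = N")
  case True
  then show ?thesis
    using discrete_norm_last by simp
next
  case False
  have "degree (jacobi_poly a b m * jacobi_poly a b n) \<le> m + n"
    by (rule order.trans[OF degree_mult_le]) (intro add_mono degree_jacobi_poly_le)
  also have "\<dots> \<le> 2 * N - 1"
    using False m n by auto
  finally have "(\<Sum>i\<le>N. poly (jacobi_poly a b m * jacobi_poly a b n) (xs i) * \<omega> i)
      = jacobi_integral a b (jacobi_poly a b m * jacobi_poly a b n)"
    by (rule quadrature_exact)
  then show ?thesis
    using False m n
    by (auto simp: jacobi_integral_jacobi_sq[OF a b] jacobi_orthogonal[OF a b] jacobi_gamma_tilde_def)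
qed

lemma discrete_jacobi_expansion:
  assumes "degree p \<le> N"
  shows "p = (\<Sum>n\<le>N. smult ((\<Sum>i\<le>N. poly p (xs i) * poly (jacobi_poly a b n) (xs i) * \<omega> i)
                              / jacobi_gamma_tilde a b N n) (jacobi_poly a b n))"
proof -
  obtain c where c: "p = (\<Sum>m\<le>N. smult (c m) (jacobi_poly a b m))"
    using jacobi_basis_exists[OF a b assms] by blast
  have coeff: "(\<Sum>i\<le>N. poly p (xs i) * poly (jacobi_poly a b n) (xs i) * \<omega> i) = c n * jacobi_gamma_tilde a b N n"
    if n: "n \<le> N" for n
  proof -
    have "(\<Sum>i\<le>N. poly p (xs i) * poly (jacobi_poly a b n) (xs i) * \<omega> i)
        = (\<Sum>i\<le>N. \<Sum>m\<le>N. c m * (poly (jacobi_poly a b m * jacobi_poly a b n) (xs i) * \<omega> i))"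
      unfolding c by (simp add: poly_sum sum_distrib_left sum_distrib_right mult_ac)
    also have "\<dots> = (\<Sum>m\<le>N. c m * (\<Sum>i\<le>N. poly (jacobi_poly a b m * jacobi_poly a b n) (xs i) * \<omega> i))"
      by (subst sum.swap) (simp add: sum_distrib_left)
    also have "\<dots> = (\<Sum>m\<le>N. if m = n then c n * jacobi_gamma_tilde a b N n else 0)"
      using n by (intro sum.cong refl) (simp add: discrete_orthogonality del: poly_mult)
    also have "\<dots> = c n * jacobi_gamma_tilde a b N n"
      using n by simp
    finally show ?thesis .
  qed
  have "(\<Sum>n\<le>N. smult ((\<Sum>i\<le>N. poly p (xs i) * poly (jacobi_poly a b n) (xs i) * \<omega> i)
                          / jacobi_gamma_tilde a b N n) (jacobi_poly a b n))
      = (\<Sum>n\<le>N. smult (c n) (jacobi_poly a b n))"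
    using jacobi_gamma_tilde_pos[OF N a b, THEN less_imp_neq, symmetric] by (intro sum.cong refl) (simp add: coeff)
  then show ?thesis
    by (rule trans[OF c sym])
qed

lemma lobatto_cardinal:
  assumes j: "j \<le> N" and i: "i \<le> N"
  shows "poly (\<Sum>n\<le>N. smult (\<omega> j / jacobi_gamma_tilde a b N n * poly (jacobi_poly a b n) (xs j))
                           (jacobi_poly a b n)) (xs i) = (if i = j then 1 else 0)"
proof -
  obtain l where l: "degree l \<le> N" "\<And>i. i \<le> N \<Longrightarrow> poly l (xs i) = (if i = j then 1 else 0)"
    using lagrange_basis_poly[OF inj_on_nodes j] by blast
  have "(\<Sum>i\<le>N. poly l (xs i) * poly (jacobi_poly a b n) (xs i) * \<omega> i)
      = \<omega> j * poly (jacobi_poly a b n) (xs j)" for n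
  proof -
    have "(\<Sum>i\<le>N. poly l (xs i) * poly (jacobi_poly a b n) (xs i) * \<omega> i)
        = (\<Sum>i\<le>N. if i = j then \<omega> j * poly (jacobi_poly a b n) (xs j) else 0)"
      by (intro sum.cong refl) (simp add: l(2))
    then show ?thesis
      using j by simp
  qed
  then have "l = (\<Sum>n\<le>N. smult (\<omega> j / jacobi_gamma_tilde a b N n * poly (jacobi_poly a b n) (xs j))
                             (jacobi_poly a b n))"
    using discrete_jacobi_expansion[OF l(1)] by simp
  then show ?thesis
    using l(2)[OF i] by simp
qed

definition fractional_cardinal :: "real \<Rightarrow> nat \<Rightarrow> real poly" where
  "fractional_cardinal \<mu> j = smult (if j = 0 then 1 / Gamma (1 - \<mu>) else 1)
     (\<Sum>l\<le>N. smult (Gamma (real l - \<mu> + 1) / fact l *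
          (\<Sum>n=l..N. conn_coeff a b \<mu> (- \<mu>) l n *
             (\<omega> j / jacobi_gamma_tilde a b N n * poly (jacobi_poly a b n) (xs j))))
        (jacobi_poly 0 0 l))"

lemma fractional_cardinal_conditions:
  assumes \<mu>: "-1 < \<mu>" "\<mu> < 1" and first: "xs 0 = -1" and j: "j \<le> N"
  shows "degree (fractional_cardinal \<mu> j) \<le> N"
    and "poly (fractional_cardinal \<mu> j) (-1) = (if j = 0 then 1 else 0)"
    and "\<forall>i\<in>{1..N}. rl_hat_deriv \<mu> (poly (fractional_cardinal \<mu> j)) (xs i) = (if i = j then 1 else 0)"
proof -
  define \<zeta> where "\<zeta> = (if j = 0 then 1 / Gamma (1 - \<mu>) else 1)"
  have "rl_hat_poly \<mu> (fractional_cardinal \<mu> j) = smult \<zeta>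
      (\<Sum>n\<le>N. smult (\<omega> j / jacobi_gamma_tilde a b N n * poly (jacobi_poly a b n) (xs j)) (jacobi_poly a b n))"
    unfolding fractional_cardinal_def \<zeta>_def[symmetric] rl_hat_poly_smult rl_hat_poly_legendre_expansion[OF a b \<mu>] ..
  then have rl: "poly (rl_hat_poly \<mu> (fractional_cardinal \<mu> j)) (xs i) = \<zeta> * (if i = j then 1 else 0)"
    if "i \<le> N" for i
    using lobatto_cardinal[OF j that] by simp
  show "degree (fractional_cardinal \<mu> j) \<le> N"
    unfolding fractional_cardinal_def
    by (intro order.trans[OF degree_smult_le] degree_sum_le order.trans[OF degree_smult_le]
              order.trans[OF degree_jacobi_poly_le]) auto
  have "Gamma (1 - \<mu>) > 0"
    using \<mu> by simp
  then show "poly (fractional_cardinal \<mu> j) (-1) = (if j = 0 then 1 else 0)"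
    using rl[of 0] first poly_rl_hat_poly_minus_one[of \<mu> "fractional_cardinal \<mu> j"]
    by (auto simp: \<zeta>_def)
  show "\<forall>i\<in>{1..N}. rl_hat_deriv \<mu> (poly (fractional_cardinal \<mu> j)) (xs i) = (if i = j then 1 else 0)"
  proof
    fix i assume i: "i \<in> {1..N}"
    then have "xs i > -1"
      using nodes_less[of 0 i] first by simp
    then show "rl_hat_deriv \<mu> (poly (fractional_cardinal \<mu> j)) (xs i) = (if i = j then 1 else 0)"
      using rl[of i] i by (simp add: rl_hat_deriv_poly[OF \<mu>(2)] \<zeta>_def)
  qed
qed

end

theorem theorem5p2:
  fixes N :: nat and \<alpha> \<beta> \<mu> :: real and xs \<omega> :: "nat \<Rightarrow> real" and Q :: "nat \<Rightarrow> real poly"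
  assumes N: "N \<ge> 1"
    and \<alpha>: "\<alpha> > -1" and \<beta>: "\<beta> > -1" and \<mu>: "0 < \<mu>" "\<mu> < 1"
    and nodes_mono: "\<forall>i<N. xs i < xs (Suc i)"
    and nodes_ends: "xs 0 = -1" "xs N = 1"
    and nodes_zeros: "{t. poly ([:1, 0, -1:] * pderiv (jacobi_poly \<alpha> \<beta> N)) t = 0} = xs ` {0..N}"
    and weights: "\<forall>p :: real poly. degree p \<le> 2 * N - 1 \<longrightarrow>
        integral {-1..1} (\<lambda>t. poly p t * (1 - t) powr \<alpha> * (1 + t) powr \<beta>)
          = (\<Sum>j\<le>N. poly p (xs j) * \<omega> j)"
    and Q_deg: "\<forall>j\<le>N. degree (Q j) \<le> N"
    and Q0: "\<forall>i\<in>{1..N}. rl_hat_deriv \<mu> (poly (Q 0)) (xs i) = 0" "poly (Q 0) (-1) = 1"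
    and Qj: "\<forall>j\<in>{1..N}. (\<forall>i\<in>{1..N}. rl_hat_deriv \<mu> (poly (Q j)) (xs i) = (if i = j then 1 else 0))
                          \<and> poly (Q j) (-1) = 0"
  shows "\<forall>j\<le>N. \<forall>x. poly (Q j) x =
           (if j = 0 then 1 / Gamma (1 - \<mu>) else 1) *
           (\<Sum>l\<le>N. Gamma (real l - \<mu> + 1) / fact l *
              (\<Sum>n=l..N. conn_coeff \<alpha> \<beta> \<mu> (- \<mu>) l n *
                   (\<omega> j / jacobi_gamma_tilde \<alpha> \<beta> N n * poly (jacobi_poly \<alpha> \<beta> n) (xs j)))
              * poly (jacobi_poly 0 0 l) x)"
proof -
  interpret jacobi_gauss_lobatto N \<alpha> \<beta> xs \<omega>
  proof
    show "poly ([:1, 0, -1:] * pderiv (jacobi_poly \<alpha> \<beta> N)) (xs i) = 0" if "i \<le> N" for i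
      using nodes_zeros that by auto
  qed (use N \<alpha> \<beta> nodes_mono weights in \<open>auto simp: jacobi_integral_def\<close>)
  have \<mu>': "-1 < \<mu>" "\<mu> < 1"
    using \<mu> by auto
  have inner: "xs i > -1" if "1 \<le> i" "i \<le> N" for i
    using nodes_less[of 0 i] that nodes_ends by simp
  have "Q j = fractional_cardinal \<mu> j" if j: "j \<le> N" for j
  proof (rule eq_if_rl_hat_deriv_eq_at_nodes[OF \<mu>(2) inj_on_nodes nodes_ends(1) inner])
    note cardinal = fractional_cardinal_conditions[OF \<mu>' nodes_ends(1) j]
    show "degree (Q j) \<le> N" "degree (fractional_cardinal \<mu> j) \<le> N"
      using Q_deg j cardinal(1) by simp_all
    show "poly (Q j) (-1) = poly (fractional_cardinal \<mu> j) (-1)"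
      using cardinal(2) Q0 Qj j by (cases "j = 0") auto
    show "\<forall>i\<in>{1..N}. rl_hat_deriv \<mu> (poly (Q j)) (xs i) = rl_hat_deriv \<mu> (poly (fractional_cardinal \<mu> j)) (xs i)"
      using cardinal(3) Q0 Qj j by (cases "j = 0") auto
  qed
  then show ?thesis
    by (simp add: fractional_cardinal_def poly_sum)
qed

end
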